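(* Let $f(d,m)$ denote the number of $m$-tuples $(\sigma_1,\ldots,\sigma_m)$ of transpositions in $S_d$ such that, writing $\sigma_j=(a_j\,b_j)$ with $a_j<b_j$, $b_1\le b_2\le\cdots\le b_m$ (no transitivity or cycle-type condition). Then \[ Z(x,\hbar)=1+\sum_{d\ge1}\sum_{m\ge0}\frac{f(d,m)}{d!}x^d\hbar^{m-d}. \]
   Context: Monotone Hurwitz numbers $\vec H_{g,n}(\mu_1,\ldots,\mu_n)$: with $|\boldsymbol\mu|=\sum\mu_i$ and $m=2g-2+n+|\boldsymbol\mu|$, it is $\frac{1}{|\boldsymbol\mu|!}$ times the number of $m$-tuples of transpositions $(\sigma_1,\ldots,\sigma_m)$ in $S_{|\boldsymbol\mu|}$, with a labelling of the cycles of $\sigma_1\circ\cdots\circ\sigma_m$ by $1,\ldots,n$ so that cycle $i$ has length $\mu_i$, such that the $\sigma_j$ generate a transitive subgroup and, writing $\sigma_j=(a_j\,b_j)$ with $a_j<b_j$, $b_1\le\cdots\le b_m$ (zero if $m<0$). Free energy $F_{g,n}(x_1,\ldots,x_n)=\sum_{\mu_i\ge1}\vec H_{g,n}(\boldsymbol\mu)\prod x_i^{\mu_i}$. Wave function: $Z(x,\hbar)=\exp\big[\sum_{g\ge0}\sum_{n\ge1}\frac{\hbar^{2g-2+n}}{n!}F_{g,n}(x,\ldots,x)\big]\in\mathbb{Q}[[x\hbar^{-1},\hbar]]$. *)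

theory Defs
  imports "HOL-Computational_Algebra.Formal_Power_Series" "HOL-Combinatorics.Transposition"
    "HOL-Library.FuncSet"
begin

text \<open>A transposition (a b) with a < b in S_d (acting on {1..d}) is encoded by the pair (a,b);
  this encoding is a bijection onto the transpositions of S_d.\<close>

definition transp_pairs :: "nat \<Rightarrow> (nat \<times> nat) set" where
  "transp_pairs d = {(a, b). 1 \<le> a \<and> a < b \<and> b \<le> d}"

definition prod_transp :: "(nat \<times> nat) list \<Rightarrow> nat \<Rightarrow> nat" where
  "prod_transp ts = foldr (\<lambda>(a, b) p. transpose a b \<circ> p) ts id"

definition monotone_tuple :: "nat \<Rightarrow> nat \<Rightarrow> (nat \<times> nat) list set" where
  "monotone_tuple d m = {ts. length ts = m \<and> set ts \<subseteq> transp_pairs d \<and> sorted (map snd ts)}"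

text \<open>The subgroup generated by the sigma_j acts transitively on {1..d}.  Since the generators
  are involutions, the generated subgroup consists exactly of the finite products of
  generators.\<close>
definition transitive_tuple :: "nat \<Rightarrow> (nat \<times> nat) list \<Rightarrow> bool" where
  "transitive_tuple d ts \<longleftrightarrow>
     (\<forall>x\<in>{1..d}. \<forall>y\<in>{1..d}. \<exists>w\<in>lists (set ts). prod_transp w x = y)"

definition cycles_of :: "nat \<Rightarrow> (nat \<Rightarrow> nat) \<Rightarrow> nat set set" where
  "cycles_of d p = {{(p ^^ k) x | k. True} | x. x \<in> {1..d}}"

text \<open>Labellings of the cycles of p by the labels 0..n-1 (standing for 1..n) so that
  cycle with label i has length mu ! i.\<close>
definition labellings :: "nat \<Rightarrow> (nat \<Rightarrow> nat) \<Rightarrow> nat list \<Rightarrow> (nat \<Rightarrow> nat set) set" where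
  "labellings d p mu = {L \<in> {..<length mu} \<rightarrow>\<^sub>E cycles_of d p.
      bij_betw L {..<length mu} (cycles_of d p) \<and> (\<forall>i<length mu. card (L i) = mu ! i)}"

definition monotone_hurwitz :: "nat \<Rightarrow> nat list \<Rightarrow> rat" where
  "monotone_hurwitz g mu =
     (let d = sum_list mu; n = length mu; m = 2 * int g - 2 + int n + int d in
      if m < 0 then 0
      else of_nat (card {(ts, L). ts \<in> monotone_tuple d (nat m) \<and> transitive_tuple d ts
                                 \<and> L \<in> labellings d (prod_transp ts) mu}) / fact d)"

text \<open>Coefficient of x^d in F_{g,n}(x,...,x).\<close>
definition free_energy_diag_coeff :: "nat \<Rightarrow> nat \<Rightarrow> nat \<Rightarrow> rat" where
  "free_energy_diag_coeff g n d =
     (\<Sum>mu\<in>{mu. length mu = n \<and> (\<forall>i\<in>set mu. 1 \<le> i) \<and> sum_list mu = d}. monotone_hurwitz g mu)"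

text \<open>Elements of Q[[x hbar^-1, hbar]] are represented as bivariate power series in
  y = x hbar^-1 (outer variable) and hbar (inner variable): the monomial x^d hbar^k equals
  y^d hbar^(k+d).  The exponent sum_{g,n} hbar^(2g-2+n)/n! F_{g,n}(x,...,x) has coefficient of
  y^d hbar^m equal to the sum over g,n>=1 with 2g-2+n+d = m of F_{g,n}-coefficient of x^d / n!.
  The bounds g <= m and n <= d are automatic (for n > d there are no mu; 2g <= m since n,d >= 1)
  and only serve to make the sum syntactically finite.\<close>
definition log_wave :: "rat fps fps" where
  "log_wave = Abs_fps (\<lambda>d. Abs_fps (\<lambda>m.
      \<Sum>g\<in>{..m}. \<Sum>n\<in>{1..d}.
        if 2 * int g - 2 + int n + int d = int m
        then free_energy_diag_coeff g n d / fact n else 0))"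

definition exp_series :: "rat fps fps" where
  "exp_series = Abs_fps (\<lambda>k. fps_const (1 / fact k))"

text \<open>The wave function Z = exp(log_wave), via formal composition (log_wave has zero
  constant term in y).\<close>
definition wave_function :: "rat fps fps" where
  "wave_function = fps_compose exp_series log_wave"

definition f_count :: "nat \<Rightarrow> nat \<Rightarrow> nat" where
  "f_count d m = card (monotone_tuple d m)"

end

(* The sum over genera and cycle types defining the exponent collapses: by the
   Riemann-Hurwitz bound and parity, a transitive monotone tuple in S_d with m transpositions
   contributes to exactly one pair (g, n), namely n = number of cycles of its product, and its
   labellings of cycles, summed over all cycle types, number n!, cancelling the factor 1/n!.
   So the exponent L is the exponential generating series of transitive monotone tuples.
   A monotone tuple splits uniquely into the transpositions inside the connected component of
   the point d, which form a transitive monotone tuple on that component, and the remaining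
   ones, which form a monotone tuple on its complement; sorting the concatenation by the larger
   entries inverts the splitting.  The resulting recursion says that the series Z of all
   monotone tuples satisfies Z' = Z L' (derivative in the first variable), which is also the
   equation of exp L; both have constant term 1. *)

theory Submission
  imports Defs "HOL-Combinatorics.Orbits" "HOL-Library.Multiset" "HOL-Library.Infinite_Set"
begin

unbundle fps_syntax

section \<open>Cycles of a permutation composed with a transposition\<close>

lemma permutation_orbit_eq:
  assumes "permutation p" "y \<in> orbit p x"
  shows "orbit p y = orbit p x"
  using orbit_cyclic_eq3[OF cyclic_on_orbit'[OF assms(1)] assms(2)] .

lemma permutation_orbit_disjoint:
  assumes "permutation p" "orbit p x \<noteq> orbit p y"
  shows "orbit p x \<inter> orbit p y = {}"
  using permutation_orbit_eq[OF assms(1)] assms(2) by blast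

lemma funpow_transpose_comp_eq:
  fixes p :: "'a \<Rightarrow> 'a"
  assumes "\<And>k. 0 < k \<Longrightarrow> k < K \<Longrightarrow> (p ^^ k) x \<noteq> a \<and> (p ^^ k) x \<noteq> b" "k < K"
  shows "((transpose a b \<circ> p) ^^ k) x = (p ^^ k) x"
  using assms(2)
proof (induction k)
  case (Suc k)
  have "(p ^^ Suc k) x \<noteq> a" "(p ^^ Suc k) x \<noteq> b" using assms(1)[of "Suc k"] Suc.prems by auto
  then show ?case using Suc by simp
qed simp

lemma funpow_transpose_comp_hit:
  fixes p :: "'a \<Rightarrow> 'a"
  assumes "\<And>k. 0 < k \<Longrightarrow> k < K \<Longrightarrow> (p ^^ k) x \<noteq> a \<and> (p ^^ k) x \<noteq> b" "0 < K"
  shows "((transpose a b \<circ> p) ^^ K) x = transpose a b ((p ^^ K) x)"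
proof -
  obtain k where K: "K = Suc k" using assms(2) by (cases K) auto
  have "((transpose a b \<circ> p) ^^ k) x = (p ^^ k) x"
    using funpow_transpose_comp_eq[OF assms(1)] K by simp
  then show ?thesis unfolding K by simp
qed

text \<open>Composing with the transposition (a b) cuts the cycle of p through a and b into two
  cycles when b is in the cycle of a, and glues the two cycles together otherwise.\<close>

lemma orbit_transpose_comp_cut:
  assumes p: "permutation p" and "a \<noteq> b" and b: "b \<in> orbit p a"
  shows "orbit (transpose a b \<circ> p) a = (\<lambda>k. (p ^^ k) a) ` {..<funpow_dist1 p a b}"
proof -
  let ?j = "funpow_dist1 p a b"
  have hit: "(p ^^ ?j) a = b" by (rule funpow_dist1_prop[OF b])
  have avoid: "(p ^^ k) a \<noteq> a \<and> (p ^^ k) a \<noteq> b" if "0 < k" "k < ?j" for k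
    using funpow_neq_less_funpow_dist1[OF b, of 0 k] funpow_dist1_least[of k p a b] that by auto
  have "((transpose a b \<circ> p) ^^ ?j) a = a"
    using funpow_transpose_comp_hit[where K = ?j, OF avoid] hit by simp
  then have "orbit (transpose a b \<circ> p) a = {((transpose a b \<circ> p) ^^ k) a | k. k < ?j}"
    by (rule orbit_altdef_bounded) simp
  also have "\<dots> = (\<lambda>k. ((transpose a b \<circ> p) ^^ k) a) ` {..<?j}"
    by auto
  also have "\<dots> = (\<lambda>k. (p ^^ k) a) ` {..<?j}"
    using funpow_transpose_comp_eq[where K = ?j, OF avoid] by (intro image_cong) auto
  finally show ?thesis .
qed

lemma orbit_transpose_comp_split:
  assumes p: "permutation p" and ab: "a \<noteq> b" and b: "b \<in> orbit p a"
  shows "orbit (transpose a b \<circ> p) a \<union> orbit (transpose a b \<circ> p) b = orbit p a"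
    and "b \<notin> orbit (transpose a b \<circ> p) a"
proof -
  let ?q = "transpose a b \<circ> p"
  have a: "a \<in> orbit p b"
    using orbit_swap[OF permutation_self_in_orbit[OF p] b] .
  define j where "j = funpow_dist1 p a b"
  define i where "i = funpow_dist1 p b a"
  have qa: "orbit ?q a = (\<lambda>k. (p ^^ k) a) ` {..<j}"
    unfolding j_def by (rule orbit_transpose_comp_cut[OF p ab b])
  have qb: "orbit ?q b = (\<lambda>k. (p ^^ k) b) ` {..<i}"
    using orbit_transpose_comp_cut[OF p ab[symmetric] a] unfolding i_def transpose_commute[of b a] .
  have hit: "(p ^^ j) a = b"
    unfolding j_def by (rule funpow_dist1_prop[OF b])
  have shift: "(p ^^ (k + j)) a = (p ^^ k) b" for k
    by (simp only: funpow_add o_apply hit)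
  have "(p ^^ (i + j)) a = a"
    using shift[of i] funpow_dist1_prop[OF a] unfolding i_def by simp
  then have "orbit p a = {(p ^^ k) a | k. k < i + j}"
    by (rule orbit_altdef_bounded) (simp add: j_def)
  also have "\<dots> = (\<lambda>k. (p ^^ k) a) ` {..<j} \<union> (\<lambda>k. (p ^^ k) b) ` {..<i}"
  proof (intro equalityI subsetI)
    fix z assume "z \<in> {(p ^^ k) a | k. k < i + j}"
    then obtain k where "z = (p ^^ k) a" "k < i + j" by auto
    then show "z \<in> (\<lambda>k. (p ^^ k) a) ` {..<j} \<union> (\<lambda>k. (p ^^ k) b) ` {..<i}"
      using shift[of "k - j"] by (cases "k < j") auto
  next
    fix z assume "z \<in> (\<lambda>k. (p ^^ k) a) ` {..<j} \<union> (\<lambda>k. (p ^^ k) b) ` {..<i}"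
    then show "z \<in> {(p ^^ k) a | k. k < i + j}"
      using shift by (auto intro: exI[of _ "k + j" for k])
  qed
  finally show "orbit ?q a \<union> orbit ?q b = orbit p a"
    unfolding qa qb by simp
  show "b \<notin> orbit ?q a"
  proof
    assume "b \<in> orbit ?q a"
    then obtain k where "(p ^^ k) a = b" "k < j" unfolding qa by auto
    then show False
      using ab funpow_dist1_least[of k p a b] unfolding j_def by (cases "k = 0") auto
  qed
qed

lemma orbit_transpose_comp_contains:
  assumes p: "permutation p" and b: "b \<notin> orbit p a"
  shows "orbit p a \<subseteq> orbit (transpose a b \<circ> p) a" "b \<in> orbit (transpose a b \<circ> p) a"
proof -
  let ?q = "transpose a b \<circ> p"
  let ?L = "funpow_dist1 p a a"
  have a: "a \<in> orbit p a" by (rule permutation_self_in_orbit[OF p])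
  have avoid: "(p ^^ k) a \<noteq> a \<and> (p ^^ k) a \<noteq> b" if "0 < k" "k < ?L" for k
    using funpow_dist1_least[of k p a a] b that by (auto simp: orbit_altdef)
  have q_orbit: "orbit ?q a = {(?q ^^ k) a | k. True}"
    by (intro orbit_altdef_permutation permutation_compose permutation_swap_id p)
  show "orbit p a \<subseteq> orbit ?q a"
  proof
    fix z assume "z \<in> orbit p a"
    then obtain n where "n < ?L" "z = (p ^^ n) a"
      unfolding orbit_conv_funpow_dist1[OF a] by auto
    then have "z = (?q ^^ n) a"
      using funpow_transpose_comp_eq[where K = ?L, OF avoid] by simp
    then show "z \<in> orbit ?q a"
      unfolding q_orbit by auto
  qed
  have "(?q ^^ ?L) a = b"
    using funpow_transpose_comp_hit[where K = ?L, OF avoid] funpow_dist1_prop[OF a] by simp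
  then show "b \<in> orbit ?q a"
    unfolding q_orbit by (auto intro: exI[of _ ?L])
qed

lemma orbit_transpose_comp_merge:
  assumes p: "permutation p" and b: "b \<notin> orbit p a"
  shows "orbit (transpose a b \<circ> p) a = orbit p a \<union> orbit p b"
proof -
  let ?q = "transpose a b \<circ> p"
  have q: "permutation ?q"
    by (intro permutation_compose permutation_swap_id p)
  have a: "a \<notin> orbit p b"
    using b permutation_orbit_eq[OF p, of a b] permutation_self_in_orbit[OF p, of b] by auto
  have ba: "orbit ?q b = orbit ?q a"
    using permutation_orbit_eq[OF q orbit_transpose_comp_contains(2)[OF p b]] .
  have "orbit p b \<subseteq> orbit ?q b"
    using orbit_transpose_comp_contains(1)[OF p a] unfolding transpose_commute[of b a] .
  moreover have "orbit ?q a \<subseteq> orbit p a \<union> orbit p b"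
  proof -
    define W where "W = orbit p a \<union> orbit p b"
    have ab: "a \<in> W" "b \<in> W"
      unfolding W_def using permutation_self_in_orbit[OF p] by auto
    have closed: "?q y \<in> W" if "y \<in> W" for y
    proof -
      have "p y \<in> W" using that unfolding W_def by (auto intro: orbit.step)
      then show ?thesis using ab by (cases "p y = a"; cases "p y = b") simp_all
    qed
    have "y \<in> W" if "y \<in> orbit ?q a" for y
      using that by induction (use ab closed in auto)
    then show ?thesis unfolding W_def by blast
  qed
  ultimately show ?thesis
    using orbit_transpose_comp_contains(1)[OF p b] ba by blast
qed

lemma orbit_transpose_comp_other:
  assumes p: "permutation p" and "x \<notin> orbit p a" "x \<notin> orbit p b"
  shows "orbit (transpose a b \<circ> p) x = orbit p x"
proof (rule orbit_cong[OF permutation_self_in_orbit[OF p]])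
  fix s assume s: "s \<in> orbit p x"
  have ps: "orbit p (p s) = orbit p x"
    using permutation_orbit_eq[OF p orbit.step[OF s]] .
  have "p s \<noteq> a" "p s \<noteq> b"
    using ps assms(2,3) permutation_self_in_orbit[OF p, of x] by auto
  then show "(transpose a b \<circ> p) s = p s" by simp
qed

lemma orbit_union_closed:
  assumes p: "permutation p" and y: "y \<in> orbit p a \<union> orbit p b"
  shows "orbit p y \<subseteq> orbit p a \<union> orbit p b"
  using y permutation_orbit_eq[OF p, of y a] permutation_orbit_eq[OF p, of y b] by auto

lemma orbit_image_union:
  assumes p: "permutation p"
  shows "orbit p ` (orbit p a \<union> orbit p b) = {orbit p a, orbit p b}"
proof
  show "orbit p ` (orbit p a \<union> orbit p b) \<subseteq> {orbit p a, orbit p b}"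
    using permutation_orbit_eq[OF p, of _ a] permutation_orbit_eq[OF p, of _ b] by blast
  show "{orbit p a, orbit p b} \<subseteq> orbit p ` (orbit p a \<union> orbit p b)"
    using permutation_self_in_orbit[OF p, of a] permutation_self_in_orbit[OF p, of b] by blast
qed

lemma card_image_split:
  assumes "finite A" "U \<subseteq> A" "\<And>x y. x \<in> A - U \<Longrightarrow> y \<in> U \<Longrightarrow> f x \<noteq> f y"
  shows "card (f ` A) = card (f ` (A - U)) + card (f ` U)"
proof -
  have "f ` A = f ` (A - U) \<union> f ` U" using assms(2) by blast
  moreover have "f ` (A - U) \<inter> f ` U = {}" using assms(3) by blast
  moreover have "finite (f ` (A - U))" "finite (f ` U)"
    using assms(1,2) finite_subset by auto
  ultimately show ?thesis by (simp add: card_Un_disjoint)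
qed

lemma card_orbits_split:
  assumes p: "permutation p" and "finite A" "U \<subseteq> A" and closed: "\<And>y. y \<in> U \<Longrightarrow> orbit p y \<subseteq> U"
  shows "card (orbit p ` A) = card (orbit p ` (A - U)) + card (orbit p ` U)"
  using assms(2,3) by (rule card_image_split) (use closed permutation_self_in_orbit[OF p] in blast)

lemma card_orbits_transpose_comp:
  assumes p: "p permutes S" and S: "finite S" and ab: "a \<in> S" "b \<in> S" "a \<noteq> b"
  shows "int (card (orbit (transpose a b \<circ> p) ` S)) =
    int (card (orbit p ` S)) + (if b \<in> orbit p a then 1 else -1)"
proof -
  let ?q = "transpose a b \<circ> p"
  have pp: "permutation p"
    using p S by (auto simp: permutation_permutes)
  have q: "permutation ?q"
    by (intro permutation_compose permutation_swap_id pp)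
  define U where "U = orbit p a \<union> orbit p b"
  have U: "U \<subseteq> S"
    unfolding U_def using permutes_orbit_subset[OF p ab(1)] permutes_orbit_subset[OF p ab(2)] by simp
  have p_card: "card (orbit p ` S) = card (orbit p ` (S - U)) + card {orbit p a, orbit p b}"
    using card_orbits_split[OF pp S U] orbit_union_closed[OF pp] orbit_image_union[OF pp]
    unfolding U_def by simp
  have "orbit ?q x = orbit p x" if "x \<in> S - U" for x
    using orbit_transpose_comp_other[OF pp] that unfolding U_def by simp
  then have outside: "orbit ?q ` (S - U) = orbit p ` (S - U)"
    by (rule image_cong[OF refl])
  show ?thesis
  proof (cases "b \<in> orbit p a")
    case True
    have U_q: "U = orbit ?q a \<union> orbit ?q b"
      using orbit_transpose_comp_split(1)[OF pp ab(3) True] permutation_orbit_eq[OF pp True]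
      unfolding U_def by simp
    have "orbit ?q a \<noteq> orbit ?q b"
      using orbit_transpose_comp_split(2)[OF pp ab(3) True] permutation_self_in_orbit[OF q, of b]
      by auto
    then have "card (orbit ?q ` S) = card (orbit p ` (S - U)) + 2"
      using card_orbits_split[OF q S U] orbit_union_closed[OF q] orbit_image_union[OF q] outside
      unfolding U_q by simp
    moreover have "card {orbit p a, orbit p b} = 1"
      using permutation_orbit_eq[OF pp True] by simp
    ultimately show ?thesis using p_card True by simp
  next
    case False
    have U_q: "U = orbit ?q a \<union> orbit ?q a"
      using orbit_transpose_comp_merge[OF pp False] unfolding U_def by simp
    have closed: "orbit ?q y \<subseteq> U" if "y \<in> U" for y
      using orbit_union_closed[OF q that[unfolded U_q]] unfolding U_q .
    have "card (orbit ?q ` S) = card (orbit p ` (S - U)) + card {orbit ?q a, orbit ?q a}"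
      using card_orbits_split[OF q S U closed] orbit_image_union[OF q, of a a] outside
      unfolding U_q by simp
    then have "card (orbit ?q ` S) = card (orbit p ` (S - U)) + 1"
      by simp
    moreover have "card {orbit p a, orbit p b} = 2"
    proof -
      have "orbit p a \<noteq> orbit p b"
        using False permutation_self_in_orbit[OF pp, of b] by auto
      then show ?thesis by simp
    qed
    ultimately show ?thesis using p_card False by simp
  qed
qed

section \<open>The graph of a tuple of transpositions\<close>

lemma prod_transp_Nil [simp]: "prod_transp [] = id"
  unfolding prod_transp_def by simp

lemma prod_transp_Cons [simp]: "prod_transp ((a, b) # ts) = transpose a b \<circ> prod_transp ts"
  unfolding prod_transp_def by simp

lemma prod_transp_permutes:
  assumes "set ts \<subseteq> transp_pairs d"
  shows "prod_transp ts permutes {1..d}"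
  using assms
proof (induction ts)
  case (Cons e ts)
  obtain a b where e: "e = (a, b)" by fastforce
  have "a \<in> {1..d}" "b \<in> {1..d}"
    using Cons.prems e unfolding transp_pairs_def by auto
  then have "transpose a b permutes {1..d}" by (rule permutes_swap_id)
  moreover have "prod_transp ts permutes {1..d}"
    using Cons by auto
  ultimately show ?case
    unfolding e prod_transp_Cons by (rule permutes_compose[rotated])
qed (simp add: permutes_id)

lemma permutation_prod_transp: "permutation (prod_transp ts)"
proof (induction ts)
  case (Cons e ts)
  then show ?case
    by (cases e) (simp only: prod_transp_Cons permutation_compose permutation_swap_id)
qed (simp add: permutation_id)

lemma cycles_of_eq_orbits:
  assumes "permutation p"
  shows "cycles_of d p = orbit p ` {1..d}"
  unfolding cycles_of_def orbit_altdef_permutation[OF assms] by auto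

definition tuple_graph :: "(nat \<times> nat) list \<Rightarrow> (nat \<times> nat) set" where
  "tuple_graph ts = set ts \<union> (set ts)\<inverse>"

lemma equiv_tuple_graph: "equiv UNIV ((tuple_graph ts)\<^sup>*)"
  unfolding tuple_graph_def
  by (intro equivI refl_rtrancl sym_rtrancl sym_Un_converse trans_rtrancl) simp

lemma tuple_graph_Cons: "tuple_graph ((a, b) # ts) = insert (a, b) (insert (b, a) (tuple_graph ts))"
  unfolding tuple_graph_def by auto

lemma tuple_graph_mono: "set ts \<subseteq> set us \<Longrightarrow> tuple_graph ts \<subseteq> tuple_graph us"
  unfolding tuple_graph_def by auto

lemma prod_transp_word_in_rtrancl:
  "w \<in> lists (set ts) \<Longrightarrow> (x, prod_transp w x) \<in> (tuple_graph ts)\<^sup>*"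
proof (induction w)
  case (Cons e w)
  obtain a b where e: "e = (a, b)" by fastforce
  have "(a, b) \<in> set ts"
    using Cons.prems e by simp
  then have ab: "(a, b) \<in> tuple_graph ts" "(b, a) \<in> tuple_graph ts"
    unfolding tuple_graph_def by auto
  let ?z = "prod_transp w x"
  have "(?z, transpose a b ?z) \<in> (tuple_graph ts)\<^sup>*"
    using ab by (cases "?z = a"; cases "?z = b") auto
  then show ?case
    using Cons e by (auto intro: rtrancl_trans)
qed simp

lemma rtrancl_imp_prod_transp_word:
  assumes "(x, y) \<in> (tuple_graph ts)\<^sup>*"
  shows "\<exists>w\<in>lists (set ts). prod_transp w x = y"
  using assms
proof (induction rule: rtrancl_induct)
  case base
  show ?case by (auto intro!: bexI[of _ "[]"])
next
  case (step y z)
  then obtain w where w: "w \<in> lists (set ts)" "prod_transp w x = y" by blast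
  from step.hyps(2) consider "(y, z) \<in> set ts" | "(z, y) \<in> set ts"
    unfolding tuple_graph_def by auto
  then show ?case
  proof cases
    case 1
    then show ?thesis using w by (auto intro!: bexI[of _ "(y, z) # w"])
  next
    case 2
    then show ?thesis using w by (auto intro!: bexI[of _ "(z, y) # w"])
  qed
qed

lemma transitive_tuple_iff_connected:
  "transitive_tuple d ts \<longleftrightarrow> (\<forall>x\<in>{1..d}. \<forall>y\<in>{1..d}. (x, y) \<in> (tuple_graph ts)\<^sup>*)"
  unfolding transitive_tuple_def
  using prod_transp_word_in_rtrancl rtrancl_imp_prod_transp_word by metis

lemma orbit_prod_transp_imp_rtrancl:
  assumes "z \<in> orbit (prod_transp ts) x"
  shows "(x, z) \<in> (tuple_graph ts)\<^sup>*"
proof -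
  have step: "(y, prod_transp ts y) \<in> (tuple_graph ts)\<^sup>*" for y
    by (rule prod_transp_word_in_rtrancl) (simp add: in_listsI)
  from assms show ?thesis
    by induction (use step in \<open>auto intro: rtrancl_trans\<close>)
qed

lemma rtrancl_tuple_graph_Cons:
  "(x, y) \<in> (tuple_graph ((a, b) # ts))\<^sup>* \<longleftrightarrow>
    (x, y) \<in> (tuple_graph ts)\<^sup>* \<or>
    ((x, a) \<in> (tuple_graph ts)\<^sup>* \<and> (b, y) \<in> (tuple_graph ts)\<^sup>*) \<or>
    ((x, b) \<in> (tuple_graph ts)\<^sup>* \<and> (a, y) \<in> (tuple_graph ts)\<^sup>*)"
  (is "?L \<longleftrightarrow> ?R")
proof
  assume ?L
  then show ?R
    unfolding tuple_graph_Cons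
  proof (induction rule: rtrancl_induct)
    case (step y z)
    then show ?case by (auto intro: rtrancl_into_rtrancl)
  qed simp
next
  have sub: "(tuple_graph ts)\<^sup>* \<subseteq> (tuple_graph ((a, b) # ts))\<^sup>*"
    by (intro rtrancl_mono tuple_graph_mono) auto
  have "(a, b) \<in> (tuple_graph ((a, b) # ts))\<^sup>*" "(b, a) \<in> (tuple_graph ((a, b) # ts))\<^sup>*"
    unfolding tuple_graph_Cons by auto
  moreover assume ?R
  ultimately show ?L
    using sub by (blast intro: rtrancl_trans)
qed

definition components :: "(nat \<times> nat) list \<Rightarrow> nat set \<Rightarrow> nat set set" where
  "components ts A = (\<lambda>x. (tuple_graph ts)\<^sup>* `` {x}) ` A"

lemma components_Cons_connected:
  assumes "(a, b) \<in> (tuple_graph ts)\<^sup>*"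
  shows "components ((a, b) # ts) A = components ts A"
proof -
  have "(b, a) \<in> (tuple_graph ts)\<^sup>*"
    using assms equiv_tuple_graph by (metis equiv_class_eq_iff)
  then have "(x, y) \<in> (tuple_graph ((a, b) # ts))\<^sup>* \<longleftrightarrow> (x, y) \<in> (tuple_graph ts)\<^sup>*" for x y
    using assms unfolding rtrancl_tuple_graph_Cons by (blast intro: rtrancl_trans)
  then have "(tuple_graph ((a, b) # ts))\<^sup>* = (tuple_graph ts)\<^sup>*"
    by (simp add: set_eq_iff split_paired_All)
  then show ?thesis
    unfolding components_def by simp
qed

lemma rtrancl_tuple_graph_Cons_Image:
  fixes ts :: "(nat \<times> nat) list"
  defines "R \<equiv> (tuple_graph ts)\<^sup>*"
  shows "(tuple_graph ((a, b) # ts))\<^sup>* `` {x} =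
    (if x \<in> R `` {a} \<union> R `` {b} then R `` {a} \<union> R `` {b} else R `` {x})"
proof -
  have sym: "(y, x) \<in> R" if "(x, y) \<in> R" for x y
    using that equiv_tuple_graph[of ts] unfolding R_def equiv_def by (blast dest: symD)
  show ?thesis
  proof (cases "x \<in> R `` {a} \<union> R `` {b}")
    case True
    then have "(a, x) \<in> R \<or> (b, x) \<in> R" by simp
    then have "z \<in> (tuple_graph ((a, b) # ts))\<^sup>* `` {x} \<longleftrightarrow> z \<in> R `` {a} \<union> R `` {b}" for z
      unfolding Image_singleton_iff Un_iff rtrancl_tuple_graph_Cons R_def[symmetric]
      using sym[of a x] sym[of b x] sym[of x z] rtrancl_trans[of _ _ "tuple_graph ts", folded R_def]
      by metis
    then show ?thesis using True by (simp add: set_eq_iff)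
  next
    case False
    then have "(x, a) \<notin> R" "(x, b) \<notin> R" using sym[of x a] sym[of x b] by auto
    then show ?thesis
      using False unfolding Image_singleton rtrancl_tuple_graph_Cons R_def by simp
  qed
qed

lemma card_components_Cons_disconnected:
  assumes nab: "(a, b) \<notin> (tuple_graph ts)\<^sup>*" and A: "finite A" "a \<in> A" "b \<in> A"
  shows "card (components ((a, b) # ts) A) + 1 = card (components ts A)"
proof -
  let ?c = "\<lambda>x. (tuple_graph ts)\<^sup>* `` {x}" and ?c' = "\<lambda>x. (tuple_graph ((a, b) # ts))\<^sup>* `` {x}"
  have self: "x \<in> ?c x" for x
    by simp
  have same: "?c y = ?c x" if "y \<in> ?c x" for x y
    using that equiv_class_eq[OF equiv_tuple_graph[of ts], of x y] by simp
  define U where "U = A \<inter> (?c a \<union> ?c b)"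
  have U: "U \<subseteq> A" unfolding U_def by blast
  have inside: "?c' y = ?c a \<union> ?c b" if "y \<in> U" for y
    using that rtrancl_tuple_graph_Cons_Image[of a b ts y] unfolding U_def by simp
  have outside: "x \<notin> ?c a \<union> ?c b" "?c' x = ?c x" if "x \<in> A - U" for x
  proof -
    show x: "x \<notin> ?c a \<union> ?c b" using that unfolding U_def by blast
    show "?c' x = ?c x" using x rtrancl_tuple_graph_Cons_Image[of a b ts x] by simp
  qed
  have c_on_U: "?c ` U = {?c a, ?c b}"
  proof
    show "?c ` U \<subseteq> {?c a, ?c b}" unfolding U_def using same by blast
    show "{?c a, ?c b} \<subseteq> ?c ` U" unfolding U_def using A(2,3) self by blast
  qed
  have "a \<in> U" unfolding U_def using A(2) self[of a] by blast
  have "?c' ` U = (\<lambda>_. ?c a \<union> ?c b) ` U"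
    by (rule image_cong[OF refl inside])
  with \<open>a \<in> U\<close> have c'_on_U: "?c' ` U = {?c a \<union> ?c b}"
    by auto
  have sep: "?c x \<noteq> ?c y" "?c' x \<noteq> ?c' y" if "x \<in> A - U" "y \<in> U" for x y
  proof -
    have x: "x \<in> ?c x" "x \<notin> ?c a \<union> ?c b"
      using outside(1)[OF that(1)] by simp_all
    have "?c y \<in> {?c a, ?c b}"
      unfolding c_on_U[symmetric] using that(2) by (rule imageI)
    show "?c x \<noteq> ?c y"
    proof
      assume "?c x = ?c y"
      then have "x \<in> ?c y" using x(1) by simp
      with \<open>?c y \<in> {?c a, ?c b}\<close> x(2) show False by blast
    qed
    show "?c' x \<noteq> ?c' y"
      unfolding outside(2)[OF that(1)] inside[OF that(2)] using x by blast
  qed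
  have outside_image: "?c' ` (A - U) = ?c ` (A - U)"
    by (rule image_cong[OF refl outside(2)])
  have "?c a \<noteq> ?c b"
    using nab self[of b] by blast
  then have "card (components ts A) = card (?c ` (A - U)) + 2"
    unfolding components_def using card_image_split[OF A(1) U, of ?c] sep(1) c_on_U by simp
  moreover have "card (components ((a, b) # ts) A) = card (?c ` (A - U)) + 1"
    unfolding components_def using card_image_split[OF A(1) U, of ?c'] sep(2) c'_on_U outside_image
    by simp
  ultimately show ?thesis by simp
qed

text \<open>Riemann-Hurwitz: each transposition changes the number of cycles by one, and when it
  joins two components of the graph it also joins two cycles.\<close>

lemma card_orbits_components_bound:
  assumes "set ts \<subseteq> transp_pairs d"
  shows "int (card (orbit (prod_transp ts) ` {1..d})) + int d
           \<le> int (length ts) + 2 * int (card (components ts {1..d}))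
         \<and> even (card (orbit (prod_transp ts) ` {1..d}) + length ts + d)"
  using assms
proof (induction ts)
  case Nil
  have "orbit (prod_transp []) x = {x}" for x
    by (simp add: orbit_eq_singleton_iff)
  then have "orbit (prod_transp []) ` {1..d} = (\<lambda>x. {x}) ` {1..d}"
    "components [] {1..d} = (\<lambda>x. {x}) ` {1..d}"
    unfolding components_def tuple_graph_def by simp_all
  moreover have "card ((\<lambda>x. {x}) ` {1..d}) = d"
    by (simp add: card_image)
  ultimately show ?case by (simp del: prod_transp_Nil)
next
  case (Cons e ts)
  obtain a b where e: "e = (a, b)" by fastforce
  have ab: "a \<in> {1..d}" "b \<in> {1..d}" "a \<noteq> b"
    using Cons.prems e unfolding transp_pairs_def by auto
  have ts: "set ts \<subseteq> transp_pairs d" using Cons.prems by simp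
  define p where "p = prod_transp ts"
  define n where "n = card (orbit p ` {1..d})"
  define n' where "n' = card (orbit (transpose a b \<circ> p) ` {1..d})"
  define k where "k = card (components ts {1..d})"
  define k' where "k' = card (components ((a, b) # ts) {1..d})"
  have IH: "int n + int d \<le> int (length ts) + 2 * int k" "even (n + length ts + d)"
    using Cons.IH[OF ts] unfolding n_def k_def p_def by auto
  have n': "int n' = int n + (if b \<in> orbit p a then 1 else -1)"
    unfolding n_def n'_def p_def
    by (rule card_orbits_transpose_comp[OF prod_transp_permutes[OF ts] _ ab]) simp
  have "int n' + int d \<le> int (Suc (length ts)) + 2 * int k'"
  proof (cases "(a, b) \<in> (tuple_graph ts)\<^sup>*")
    case True
    then have "k' = k"
      unfolding k_def k'_def by (simp add: components_Cons_connected)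
    then show ?thesis using IH(1) n' by simp
  next
    case False
    then have "b \<notin> orbit p a"
      using orbit_prod_transp_imp_rtrancl unfolding p_def by blast
    moreover have "k' + 1 = k"
      unfolding k_def k'_def using card_components_Cons_disconnected[OF False _ ab(1,2)] by simp
    ultimately show ?thesis using IH(1) n' by simp
  qed
  moreover have "even (n' + Suc (length ts) + d)"
    using IH(2) n' by (cases "b \<in> orbit p a") presburger+
  ultimately show ?case
    unfolding e prod_transp_Cons length_Cons p_def[symmetric] n'_def[symmetric] k'_def[symmetric]
    by blast
qed

lemma card_cycles_of_transitive_tuple:
  assumes ts: "set ts \<subseteq> transp_pairs d" and tr: "transitive_tuple d ts" and d: "1 \<le> d"
  defines "n \<equiv> card (cycles_of d (prod_transp ts))"
  shows "1 \<le> n" "n \<le> d" "n + d \<le> length ts + 2" "even (n + length ts + d)"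
proof -
  let ?c = "\<lambda>x. (tuple_graph ts)\<^sup>* `` {x}"
  have n: "n = card (orbit (prod_transp ts) ` {1..d})"
    unfolding n_def cycles_of_eq_orbits[OF permutation_prod_transp] ..
  have "(1, x) \<in> (tuple_graph ts)\<^sup>*" if "x \<in> {1..d}" for x
    using tr d that unfolding transitive_tuple_iff_connected by simp
  then have "?c x = ?c 1" if "x \<in> {1..d}" for x
    using that equiv_class_eq[OF equiv_tuple_graph] by metis
  then have "components ts {1..d} = (\<lambda>_. ?c 1) ` {1..d}"
    unfolding components_def by (rule image_cong[OF refl])
  also have "\<dots> = {?c 1}"
    using d by auto
  finally have "components ts {1..d} = {?c 1}" .
  then show "n + d \<le> length ts + 2" "even (n + length ts + d)"
    using card_orbits_components_bound[OF ts] unfolding n[symmetric] by auto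
  show "1 \<le> n"
    unfolding n using d by (simp add: Suc_le_eq card_gt_0_iff)
  show "n \<le> d"
    unfolding n using card_image_le[of "{1..d}" "orbit (prod_transp ts)"] by simp
qed

section \<open>The logarithm of the wave function\<close>

definition pairs_on :: "nat set \<Rightarrow> (nat \<times> nat) set" where
  "pairs_on A = {(a, b). a \<in> A \<and> b \<in> A \<and> a < b}"

definition monotone_tuple_on :: "nat set \<Rightarrow> nat \<Rightarrow> (nat \<times> nat) list set" where
  "monotone_tuple_on A m = {ts. length ts = m \<and> set ts \<subseteq> pairs_on A \<and> sorted (map snd ts)}"

definition connected_tuple_on :: "nat set \<Rightarrow> nat \<Rightarrow> (nat \<times> nat) list set" where
  "connected_tuple_on A m =
     {ts \<in> monotone_tuple_on A m. \<forall>x\<in>A. \<forall>y\<in>A. (x, y) \<in> (tuple_graph ts)\<^sup>*}"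

lemma transp_pairs_eq_pairs_on: "transp_pairs d = pairs_on {1..d}"
  unfolding transp_pairs_def pairs_on_def by auto

lemma monotone_tuple_eq_monotone_tuple_on: "monotone_tuple d m = monotone_tuple_on {1..d} m"
  unfolding monotone_tuple_def monotone_tuple_on_def transp_pairs_eq_pairs_on ..

lemma connected_tuple_on_atLeastAtMost:
  "connected_tuple_on {1..d} m = {ts \<in> monotone_tuple d m. transitive_tuple d ts}"
  unfolding connected_tuple_on_def monotone_tuple_eq_monotone_tuple_on transitive_tuple_iff_connected ..

lemma finite_pairs_on: "finite A \<Longrightarrow> finite (pairs_on A)"
  unfolding pairs_on_def by (rule finite_subset[of _ "A \<times> A"]) auto

lemma finite_monotone_tuple_on:
  assumes "finite A"
  shows "finite (monotone_tuple_on A m)"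
proof (rule finite_subset)
  show "monotone_tuple_on A m \<subseteq> {ts. set ts \<subseteq> pairs_on A \<and> length ts = m}"
    unfolding monotone_tuple_on_def by auto
  show "finite {ts. set ts \<subseteq> pairs_on A \<and> length ts = m}"
    by (rule finite_lists_length_eq[OF finite_pairs_on[OF assms]])
qed

lemma finite_connected_tuple_on: "finite A \<Longrightarrow> finite (connected_tuple_on A m)"
  unfolding connected_tuple_on_def using finite_monotone_tuple_on by simp

lemma card_bij_betw_extensional:
  assumes C: "finite C" "card C = n"
  shows "card {L \<in> {..<n} \<rightarrow>\<^sub>E C. bij_betw L {..<n} C} = fact n"
proof -
  have "bij_betw L {..<n} C \<longleftrightarrow> inj_on L {..<n}" if L: "L \<in> {..<n} \<rightarrow>\<^sub>E C" for L
  proof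
    assume inj: "inj_on L {..<n}"
    have "L ` {..<n} \<subseteq> C"
      using L by (auto simp: PiE_iff)
    moreover have "card (L ` {..<n}) = card C"
      using inj C(2) by (simp add: card_image)
    ultimately have "L ` {..<n} = C"
      using card_subset_eq[OF C(1)] by blast
    then show "bij_betw L {..<n} C"
      unfolding bij_betw_def using inj by simp
  qed (simp add: bij_betw_def)
  then have "{L \<in> {..<n} \<rightarrow>\<^sub>E C. bij_betw L {..<n} C} = {L \<in> {..<n} \<rightarrow>\<^sub>E C. inj_on L {..<n}}"
    by (intro Collect_cong) blast
  also have "card \<dots> = card C ^ (n - n) * prod ((-) (card C)) {0..<n}"
    using card_inj_on_subset_funcset[OF _ C(1), of "{..<n}" "{..<n}"] by simp
  also have "\<dots> = fact n"
    using C(2) by (simp add: fact_prod_rev)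
  finally show ?thesis .
qed

definition compositions :: "nat \<Rightarrow> nat \<Rightarrow> nat list set" where
  "compositions n d = {mu. length mu = n \<and> (\<forall>i\<in>set mu. 1 \<le> i) \<and> sum_list mu = d}"

lemma finite_compositions: "finite (compositions n d)"
proof (rule finite_subset)
  show "compositions n d \<subseteq> {xs. set xs \<subseteq> {..d} \<and> length xs = n}"
    unfolding compositions_def using member_le_sum_list by fastforce
  show "finite {xs. set xs \<subseteq> {..d} \<and> length xs = n}"
    by (rule finite_lists_length_eq) simp
qed

lemma finite_labellings: "finite (labellings d p mu)"
proof (rule finite_subset)
  show "labellings d p mu \<subseteq> {..<length mu} \<rightarrow>\<^sub>E cycles_of d p"
    unfolding labellings_def by auto
  show "finite ({..<length mu} \<rightarrow>\<^sub>E cycles_of d p)"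
    unfolding cycles_of_def by (intro finite_PiE) auto
qed

lemma cycles_partition:
  assumes p: "p permutes {1..d}"
  shows "\<Union>(cycles_of d p) = {1..d}" "pairwise disjnt (cycles_of d p)"
    and "\<And>c. c \<in> cycles_of d p \<Longrightarrow> c \<noteq> {} \<and> finite c"
proof -
  have pp: "permutation p"
    using p by (auto simp: permutation_permutes)
  have C: "cycles_of d p = orbit p ` {1..d}"
    by (rule cycles_of_eq_orbits[OF pp])
  have sub: "orbit p x \<subseteq> {1..d}" if "x \<in> {1..d}" for x
    by (rule permutes_orbit_subset[OF p that])
  show "\<Union>(cycles_of d p) = {1..d}"
  proof
    show "\<Union>(cycles_of d p) \<subseteq> {1..d}"
      unfolding C by (rule UN_least) (rule sub)
    show "{1..d} \<subseteq> \<Union>(cycles_of d p)"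
      unfolding C using permutation_self_in_orbit[OF pp] by auto
  qed
  show "pairwise disjnt (cycles_of d p)"
    unfolding C pairwise_def disjnt_def using permutation_orbit_disjoint[OF pp] by auto
  show "c \<noteq> {} \<and> finite c" if c: "c \<in> cycles_of d p" for c
  proof -
    obtain x where x: "x \<in> {1..d}" "c = orbit p x"
      using c unfolding C by blast
    then show ?thesis
      using sub[OF x(1)] orbit_nonempty[of p x] finite_subset[OF _ finite_atLeastAtMost] by auto
  qed
qed

lemma UN_labellings_eq_bijections:
  assumes p: "p permutes {1..d}"
  defines "C \<equiv> cycles_of d p"
  shows "(\<Union>mu\<in>compositions n d. labellings d p mu) = {L \<in> {..<n} \<rightarrow>\<^sub>E C. bij_betw L {..<n} C}"
proof (intro equalityI subsetI)
  fix L assume "L \<in> (\<Union>mu\<in>compositions n d. labellings d p mu)"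
  then show "L \<in> {L \<in> {..<n} \<rightarrow>\<^sub>E C. bij_betw L {..<n} C}"
    unfolding labellings_def compositions_def C_def by auto
next
  fix L assume L: "L \<in> {L \<in> {..<n} \<rightarrow>\<^sub>E C. bij_betw L {..<n} C}"
  note part = cycles_partition[OF p, folded C_def]
  define mu where "mu = map (\<lambda>i. card (L i)) [0..<n]"
  have bL: "bij_betw L {..<n} C" and LC: "L \<in> {..<n} \<rightarrow>\<^sub>E C"
    using L by auto
  have "sum_list mu = (\<Sum>i<n. card (L i))"
    unfolding mu_def by (simp add: sum_list_sum_nth atLeast0LessThan)
  also have "\<dots> = sum card C"
    using sum.reindex_bij_betw[OF bL, of card] by simp
  also have "\<dots> = d"
    using card_Union_disjoint[OF part(2)] part(1,3) by simp
  finally have "sum_list mu = d" .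
  moreover have "1 \<le> card (L i)" if "i < n" for i
    using LC that part(3)[of "L i"] by (auto simp: Suc_le_eq card_gt_0_iff)
  then have "\<forall>k\<in>set mu. 1 \<le> k"
    unfolding mu_def by auto
  ultimately have "mu \<in> compositions n d"
    unfolding compositions_def mu_def by simp
  moreover have "L \<in> labellings d p mu"
    unfolding labellings_def C_def[symmetric] mu_def using bL LC by simp
  ultimately show "L \<in> (\<Union>mu\<in>compositions n d. labellings d p mu)" by blast
qed

text \<open>Summing over all cycle types of length n counts every bijective labelling of the cycles
  exactly once.\<close>

lemma sum_card_labellings:
  assumes p: "p permutes {1..d}"
  shows "(\<Sum>mu\<in>compositions n d. card (labellings d p mu)) =
    (if n = card (cycles_of d p) then fact n else 0)"
proof (cases "n = card (cycles_of d p)")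
  case False
  have "labellings d p mu = {}" if "mu \<in> compositions n d" for mu
    using that False bij_betw_same_card unfolding labellings_def compositions_def by fastforce
  then show ?thesis using False by simp
next
  case True
  have disj: "labellings d p mu \<inter> labellings d p mu' = {}"
    if "mu \<in> compositions n d" "mu' \<in> compositions n d" "mu \<noteq> mu'" for mu mu'
    using that unfolding labellings_def compositions_def by (auto intro: nth_equalityI)
  have "(\<Sum>mu\<in>compositions n d. card (labellings d p mu)) =
      card (\<Union>mu\<in>compositions n d. labellings d p mu)"
    by (rule card_UN_disjoint[OF finite_compositions, symmetric]) (use finite_labellings disj in auto)
  also have "\<dots> = fact n"
    unfolding UN_labellings_eq_bijections[OF p]
    by (rule card_bij_betw_extensional) (simp_all add: True cycles_of_def)
  finally show ?thesis
    using True by simp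
qed

lemma monotone_hurwitz_eq_sum:
  assumes mu: "mu \<in> compositions n d" and m: "2 * int g - 2 + int n + int d = int m"
  shows "monotone_hurwitz g mu =
    of_nat (\<Sum>ts\<in>connected_tuple_on {1..d} m. card (labellings d (prod_transp ts) mu)) / fact d"
proof -
  have len: "length mu = n" and sum: "sum_list mu = d"
    using mu unfolding compositions_def by auto
  have "{(ts, L). ts \<in> monotone_tuple d m \<and> transitive_tuple d ts \<and> L \<in> labellings d (prod_transp ts) mu}
      = Sigma (connected_tuple_on {1..d} m) (\<lambda>ts. labellings d (prod_transp ts) mu)"
    unfolding connected_tuple_on_atLeastAtMost by auto
  then show ?thesis
    unfolding monotone_hurwitz_def Let_def len sum using m
    by (simp add: finite_connected_tuple_on finite_labellings)
qed

lemma free_energy_diag_coeff_eq_card: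
  assumes m: "2 * int g - 2 + int n + int d = int m"
  shows "free_energy_diag_coeff g n d / fact n =
    of_nat (card {ts \<in> connected_tuple_on {1..d} m. card (cycles_of d (prod_transp ts)) = n}) / fact d"
proof -
  let ?T = "connected_tuple_on {1..d} m"
  have perm: "prod_transp ts permutes {1..d}" if "ts \<in> ?T" for ts
    using that prod_transp_permutes unfolding connected_tuple_on_atLeastAtMost monotone_tuple_def by auto
  have "free_energy_diag_coeff g n d =
      of_nat (\<Sum>mu\<in>compositions n d. \<Sum>ts\<in>?T. card (labellings d (prod_transp ts) mu)) / fact d"
    unfolding free_energy_diag_coeff_def compositions_def[symmetric]
    using monotone_hurwitz_eq_sum[OF _ m] by (simp add: sum_divide_distrib)
  also have "\<dots> = of_nat (\<Sum>ts\<in>?T. \<Sum>mu\<in>compositions n d. card (labellings d (prod_transp ts) mu)) / fact d"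
    by (subst sum.swap) (rule refl)
  also have "\<dots> = of_nat (\<Sum>ts\<in>?T. if card (cycles_of d (prod_transp ts)) = n then fact n else 0) / fact d"
    using sum_card_labellings[OF perm] by (intro arg_cong[where f = "\<lambda>x. of_nat x / fact d"] sum.cong) auto
  also have "\<dots> = fact n * of_nat (card {ts \<in> ?T. card (cycles_of d (prod_transp ts)) = n}) / fact d"
    by (simp add: sum.inter_filter[symmetric] finite_connected_tuple_on)
  finally show ?thesis by simp
qed

lemma sum_genus_indicator:
  fixes c :: "'a :: comm_monoid_add"
  assumes "1 \<le> N" "N \<le> d" "N + d \<le> m + 2" "even (N + m + d)"
  shows "(\<Sum>g\<le>m. \<Sum>n\<in>{1..d}. if 2 * int g - 2 + int n + int d = int m \<and> n = N then c else 0) = c"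
proof -
  let ?P = "\<lambda>g n. 2 * int g - 2 + int n + int d = int m"
  define g0 where "g0 = (m + 2 - N - d) div 2"
  have g0: "2 * g0 = m + 2 - N - d"
    using assms unfolding g0_def by presburger
  have P: "?P g N \<longleftrightarrow> g = g0" for g
    using g0 assms by auto
  have "(\<Sum>n\<in>{1..d}. if ?P g n \<and> n = N then c else 0) = (if g = g0 then c else 0)" for g
  proof -
    have "(\<Sum>n\<in>{1..d}. if ?P g n \<and> n = N then c else 0) =
        (\<Sum>n\<in>{1..d}. if n = N then (if ?P g N then c else 0) else 0)"
      by (intro sum.cong) auto
    also have "\<dots> = (if ?P g N then c else 0)"
      using assms by (simp add: sum.delta)
    finally show ?thesis
      unfolding P .
  qed
  moreover have "g0 \<le> m"
    using g0 assms by linarith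
  ultimately show ?thesis
    by (simp add: sum.delta)
qed

lemma log_wave_nth:
  "log_wave $ d $ m = (if d = 0 then 0 else of_nat (card (connected_tuple_on {1..d} m)) / fact d)"
proof (cases "d = 0")
  case False
  let ?T = "connected_tuple_on {1..d} m"
  let ?N = "\<lambda>ts. card (cycles_of d (prod_transp ts))"
  let ?P = "\<lambda>g n. 2 * int g - 2 + int n + int d = int m"
  have "log_wave $ d $ m =
      (\<Sum>g\<le>m. \<Sum>n\<in>{1..d}. if ?P g n then of_nat (card {ts \<in> ?T. ?N ts = n}) / fact d else 0)"
    unfolding log_wave_def using free_energy_diag_coeff_eq_card by (simp cong: if_cong)
  also have "\<dots> = (\<Sum>g\<le>m. \<Sum>n\<in>{1..d}. \<Sum>ts\<in>?T. if ?P g n \<and> ?N ts = n then 1 / fact d else 0)"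
    by (intro sum.cong refl) (simp add: sum.inter_filter[symmetric] finite_connected_tuple_on)
  also have "\<dots> = (\<Sum>g\<le>m. \<Sum>ts\<in>?T. \<Sum>n\<in>{1..d}. if ?P g n \<and> ?N ts = n then 1 / fact d else 0)"
    by (intro sum.cong refl sum.swap)
  also have "\<dots> = (\<Sum>ts\<in>?T. \<Sum>g\<le>m. \<Sum>n\<in>{1..d}. if ?P g n \<and> n = ?N ts then 1 / fact d else 0)"
    by (subst sum.swap) (intro sum.cong refl; auto)
  also have "\<dots> = (\<Sum>ts\<in>?T. 1 / fact d)"
  proof (rule sum.cong[OF refl])
    fix ts assume "ts \<in> ?T"
    then have "set ts \<subseteq> transp_pairs d" "transitive_tuple d ts" "length ts = m"
      unfolding connected_tuple_on_atLeastAtMost monotone_tuple_def by auto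
    then show "(\<Sum>g\<le>m. \<Sum>n\<in>{1..d}. if ?P g n \<and> n = ?N ts then 1 / fact d else 0) = 1 / fact d"
      using card_cycles_of_transitive_tuple[of ts d] False
      by (intro sum_genus_indicator) auto
  qed
  finally show ?thesis
    using False by simp
qed (simp add: log_wave_def)

section \<open>Splitting off a connected component\<close>

lemma sort_key_filter_append_filter:
  assumes "sorted (map f xs)"
  shows "sort_key f (filter (\<lambda>x. Q (f x)) xs @ filter (\<lambda>x. \<not> Q (f x)) xs) = xs"
proof (rule properties_for_sort_key)
  show "mset xs = mset (filter (\<lambda>x. Q (f x)) xs @ filter (\<lambda>x. \<not> Q (f x)) xs)"
    using multiset_partition[of "mset xs" "\<lambda>x. Q (f x)"] by simp
  show "filter (\<lambda>x. f k = f x) xs =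
      filter (\<lambda>x. f k = f x) (filter (\<lambda>x. Q (f x)) xs @ filter (\<lambda>x. \<not> Q (f x)) xs)" for k
  proof (cases "Q (f k)")
    case True
    then have "filter (\<lambda>x. Q (f x) \<and> f k = f x) xs = filter (\<lambda>x. f k = f x) xs"
      "filter (\<lambda>x. \<not> Q (f x) \<and> f k = f x) xs = []"
      by (auto intro: filter_cong simp: filter_empty_conv)
    then show ?thesis by (simp add: filter_filter)
  next
    case False
    then have "filter (\<lambda>x. \<not> Q (f x) \<and> f k = f x) xs = filter (\<lambda>x. f k = f x) xs"
      "filter (\<lambda>x. Q (f x) \<and> f k = f x) xs = []"
      by (auto intro: filter_cong simp: filter_empty_conv)
    then show ?thesis by (simp add: filter_filter)
  qed
qed (rule assms)

lemma rtrancl_tuple_graph_Image_subset: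
  assumes "set ts \<subseteq> pairs_on A" "t \<in> A"
  shows "(tuple_graph ts)\<^sup>* `` {t} \<subseteq> A"
proof
  fix y assume "y \<in> (tuple_graph ts)\<^sup>* `` {t}"
  then have "(t, y) \<in> (tuple_graph ts)\<^sup>*" by simp
  then show "y \<in> A"
    by induction (use assms in \<open>auto simp: tuple_graph_def pairs_on_def\<close>)
qed

lemma tuple_graph_edge_same_component:
  assumes "(a, b) \<in> set ts"
  shows "a \<in> (tuple_graph ts)\<^sup>* `` {t} \<longleftrightarrow> b \<in> (tuple_graph ts)\<^sup>* `` {t}"
proof -
  have "(a, b) \<in> tuple_graph ts" "(b, a) \<in> tuple_graph ts"
    using assms unfolding tuple_graph_def by auto
  then show ?thesis by (auto intro: rtrancl_into_rtrancl)
qed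

lemma filter_component_connected:
  assumes ts: "ts \<in> monotone_tuple_on A m" and t: "t \<in> A"
  defines "S \<equiv> (tuple_graph ts)\<^sup>* `` {t}"
  shows "filter (\<lambda>e. snd e \<in> S) ts \<in> connected_tuple_on S (length (filter (\<lambda>e. snd e \<in> S) ts))"
proof -
  define u where "u = filter (\<lambda>e. snd e \<in> S) ts"
  have st: "set ts \<subseteq> pairs_on A" and sorted: "sorted (map snd ts)"
    using ts unfolding monotone_tuple_on_def by auto
  have pairs: "set u \<subseteq> pairs_on S"
  proof
    fix e assume "e \<in> set u"
    moreover obtain a b where "e = (a, b)" by fastforce
    ultimately have ab: "(a, b) \<in> set ts" "b \<in> S" "a < b" and e: "e = (a, b)"
      using st unfolding u_def pairs_on_def by auto
    then have "a \<in> S"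
      using tuple_graph_edge_same_component[OF ab(1), of t] unfolding S_def by simp
    then show "e \<in> pairs_on S"
      using ab e unfolding pairs_on_def by simp
  qed
  have reach: "(t, y) \<in> (tuple_graph u)\<^sup>*" if "(t, y) \<in> (tuple_graph ts)\<^sup>*" for y
    using that
  proof (induction rule: rtrancl_induct)
    case (step y z)
    have "y \<in> S" "z \<in> S"
      using step.hyps unfolding S_def by (auto intro: rtrancl_into_rtrancl)
    moreover have "(y, z) \<in> set ts \<or> (z, y) \<in> set ts"
      using step.hyps(2) unfolding tuple_graph_def by auto
    ultimately have "(y, z) \<in> tuple_graph u"
      unfolding u_def tuple_graph_def by auto
    then show ?case
      using step.IH by (rule rtrancl_into_rtrancl[rotated])
  qed simp
  have "(x, y) \<in> (tuple_graph u)\<^sup>*" if "x \<in> S" "y \<in> S" for x y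
  proof -
    have "(t, x) \<in> (tuple_graph u)\<^sup>*" "(t, y) \<in> (tuple_graph u)\<^sup>*"
      using that reach unfolding S_def by auto
    moreover have "sym ((tuple_graph u)\<^sup>*)"
      using equiv_tuple_graph[of u] unfolding equiv_def by simp
    ultimately show ?thesis
      by (blast dest: symD intro: rtrancl_trans)
  qed
  moreover have "sorted (map snd u)"
    unfolding u_def using sorted by (rule sorted_filter)
  ultimately show ?thesis
    using pairs unfolding connected_tuple_on_def monotone_tuple_on_def u_def[symmetric] by simp
qed

lemma filter_not_component_monotone:
  fixes t :: nat
  assumes ts: "ts \<in> monotone_tuple_on A m"
  defines "S \<equiv> (tuple_graph ts)\<^sup>* `` {t}"
  shows "filter (\<lambda>e. snd e \<notin> S) ts \<in> monotone_tuple_on (A - S) (length (filter (\<lambda>e. snd e \<notin> S) ts))"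
proof -
  have st: "set ts \<subseteq> pairs_on A" and sorted: "sorted (map snd ts)"
    using ts unfolding monotone_tuple_on_def by auto
  have "e \<in> pairs_on (A - S)" if "e \<in> set ts" "snd e \<notin> S" for e
  proof -
    obtain a b where e: "e = (a, b)" by fastforce
    then have "a \<notin> S" "(a, b) \<in> pairs_on A"
      using that st tuple_graph_edge_same_component[of a b ts t] unfolding S_def by auto
    then show ?thesis
      using that e unfolding pairs_on_def by auto
  qed
  then show ?thesis
    using sorted sorted_filter[of snd] unfolding monotone_tuple_on_def by auto
qed

lemma component_sort_key_append:
  assumes u: "u \<in> connected_tuple_on S j" and v: "v \<in> monotone_tuple_on (A - S) k"
    and t: "t \<in> S"
  shows "(tuple_graph (sort_key snd (u @ v)))\<^sup>* `` {t} = S"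
proof -
  let ?ts = "sort_key snd (u @ v)"
  have u_pairs: "set u \<subseteq> pairs_on S" and u_conn: "\<forall>x\<in>S. \<forall>y\<in>S. (x, y) \<in> (tuple_graph u)\<^sup>*"
    using u unfolding connected_tuple_on_def monotone_tuple_on_def by auto
  have v_pairs: "set v \<subseteq> pairs_on (A - S)"
    using v unfolding monotone_tuple_on_def by auto
  show ?thesis
  proof
    show "(tuple_graph ?ts)\<^sup>* `` {t} \<subseteq> S"
    proof
      fix y assume "y \<in> (tuple_graph ?ts)\<^sup>* `` {t}"
      then have "(t, y) \<in> (tuple_graph ?ts)\<^sup>*" by simp
      then show "y \<in> S"
      proof induction
        case (step y z)
        then show ?case
          using u_pairs v_pairs unfolding tuple_graph_def pairs_on_def by auto
      qed (rule t)
    qed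
    show "S \<subseteq> (tuple_graph ?ts)\<^sup>* `` {t}"
    proof
      fix y assume "y \<in> S"
      then have "(t, y) \<in> (tuple_graph u)\<^sup>*"
        using u_conn t by blast
      moreover have "tuple_graph u \<subseteq> tuple_graph ?ts"
        by (rule tuple_graph_mono) simp
      ultimately show "y \<in> (tuple_graph ?ts)\<^sup>* `` {t}"
        using rtrancl_mono by blast
    qed
  qed
qed

definition split_component ::
    "nat \<Rightarrow> (nat \<times> nat) list \<Rightarrow> nat set \<times> (nat \<times> nat) list \<times> (nat \<times> nat) list" where
  "split_component t ts = (let S = (tuple_graph ts)\<^sup>* `` {t} in
     (S, filter (\<lambda>e. snd e \<in> S) ts, filter (\<lambda>e. snd e \<notin> S) ts))"

definition component_splittings ::
    "nat set \<Rightarrow> nat \<Rightarrow> nat \<Rightarrow> (nat set \<times> (nat \<times> nat) list \<times> (nat \<times> nat) list) set" where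
  "component_splittings A t m = (SIGMA S:{S. S \<subseteq> A \<and> t \<in> S}.
     \<Union>j\<le>m. connected_tuple_on S j \<times> monotone_tuple_on (A - S) (m - j))"

lemma split_component_in_component_splittings:
  assumes ts: "ts \<in> monotone_tuple_on A m" and t: "t \<in> A"
  shows "split_component t ts \<in> component_splittings A t m"
proof -
  define S where "S = (tuple_graph ts)\<^sup>* `` {t}"
  define u where "u = filter (\<lambda>e. snd e \<in> S) ts"
  define v where "v = filter (\<lambda>e. snd e \<notin> S) ts"
  have "S \<subseteq> A \<and> t \<in> S"
    using rtrancl_tuple_graph_Image_subset[of ts A t] ts t
    unfolding S_def monotone_tuple_on_def by auto
  moreover have "length u + length v = m"
    using ts sum_length_filter_compl unfolding u_def v_def monotone_tuple_on_def by auto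
  moreover have "u \<in> connected_tuple_on S (length u)"
    using filter_component_connected[OF ts t] unfolding u_def S_def .
  moreover have "v \<in> monotone_tuple_on (A - S) (length v)"
    using filter_not_component_monotone[OF ts] unfolding v_def S_def .
  ultimately show ?thesis
    unfolding component_splittings_def split_component_def Let_def
      S_def[symmetric] u_def[symmetric] v_def[symmetric]
    by force
qed

lemma bij_betw_split_component:
  assumes t: "t \<in> A"
  shows "bij_betw (split_component t) (monotone_tuple_on A m) (component_splittings A t m)"
proof (rule bij_betw_byWitness[where f' = "\<lambda>(S, u, v). sort_key snd (u @ v)"])
  show "\<forall>ts\<in>monotone_tuple_on A m. (\<lambda>(S, u, v). sort_key snd (u @ v)) (split_component t ts) = ts"
    unfolding split_component_def monotone_tuple_on_def Let_def
    using sort_key_filter_append_filter[of snd] by auto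
  show "\<forall>x\<in>component_splittings A t m. split_component t ((\<lambda>(S, u, v). sort_key snd (u @ v)) x) = x"
  proof
    fix x assume "x \<in> component_splittings A t m"
    then obtain S u v j where x: "x = (S, u, v)" "t \<in> S"
      and u: "u \<in> connected_tuple_on S j" and v: "v \<in> monotone_tuple_on (A - S) (m - j)"
      unfolding component_splittings_def by auto
    have "\<forall>e\<in>set u. snd e \<in> S" "\<forall>e\<in>set v. snd e \<notin> S"
      using u v unfolding connected_tuple_on_def monotone_tuple_on_def pairs_on_def by auto
    moreover have "sorted (map snd u)" "sorted (map snd v)"
      using u v unfolding connected_tuple_on_def monotone_tuple_on_def by auto
    moreover have "(tuple_graph (sort_key snd (u @ v)))\<^sup>* `` {t} = S"
      by (rule component_sort_key_append[OF u v x(2)])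
    ultimately show "split_component t ((\<lambda>(S, u, v). sort_key snd (u @ v)) x) = x"
      unfolding x split_component_def Let_def by (simp add: filter_sort sort_key_id_if_sorted)
  qed
  show "split_component t ` monotone_tuple_on A m \<subseteq> component_splittings A t m"
    using split_component_in_component_splittings[OF _ t] by blast
  show "(\<lambda>(S, u, v). sort_key snd (u @ v)) ` component_splittings A t m \<subseteq> monotone_tuple_on A m"
  proof
    fix ts assume "ts \<in> (\<lambda>(S, u, v). sort_key snd (u @ v)) ` component_splittings A t m"
    then obtain S u v j where ts: "ts = sort_key snd (u @ v)" and "S \<subseteq> A" "j \<le> m"
      and u: "u \<in> connected_tuple_on S j" and v: "v \<in> monotone_tuple_on (A - S) (m - j)"
      unfolding component_splittings_def by auto
    then have "set u \<subseteq> pairs_on A" "set v \<subseteq> pairs_on A" "length u + length v = m"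
      unfolding connected_tuple_on_def monotone_tuple_on_def pairs_on_def by auto
    then show "ts \<in> monotone_tuple_on A m"
      unfolding ts monotone_tuple_on_def by auto
  qed
qed

lemma card_component_splittings:
  assumes A: "finite A"
  shows "card (component_splittings A t m) =
    (\<Sum>S | S \<subseteq> A \<and> t \<in> S. \<Sum>j\<le>m.
       card (connected_tuple_on S j) * card (monotone_tuple_on (A - S) (m - j)))"
proof -
  have fin: "finite (connected_tuple_on S j \<times> monotone_tuple_on (A - S) (m - j))" if "S \<subseteq> A" for S j
    using that A finite_subset[of S A] by (simp add: finite_connected_tuple_on finite_monotone_tuple_on)
  have "card (\<Union>j\<le>m. connected_tuple_on S j \<times> monotone_tuple_on (A - S) (m - j)) =
      (\<Sum>j\<le>m. card (connected_tuple_on S j) * card (monotone_tuple_on (A - S) (m - j)))"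
    if "S \<subseteq> A" for S
    unfolding card_cartesian_product[symmetric]
  proof (rule card_UN_disjoint)
    show "\<forall>j\<in>{..m}. finite (connected_tuple_on S j \<times> monotone_tuple_on (A - S) (m - j))"
      using fin[OF that] by blast
    show "\<forall>i\<in>{..m}. \<forall>j\<in>{..m}. i \<noteq> j \<longrightarrow>
        (connected_tuple_on S i \<times> monotone_tuple_on (A - S) (m - i)) \<inter>
        (connected_tuple_on S j \<times> monotone_tuple_on (A - S) (m - j)) = {}"
      unfolding connected_tuple_on_def monotone_tuple_on_def by auto
  qed simp
  moreover have "finite {S. S \<subseteq> A \<and> t \<in> S}"
    using A by simp
  ultimately show ?thesis
    unfolding component_splittings_def using fin by (subst card_SigmaI) auto
qed

lemma card_monotone_tuple_on_split:
  assumes "finite A" "t \<in> A"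
  shows "card (monotone_tuple_on A m) =
    (\<Sum>S | S \<subseteq> A \<and> t \<in> S. \<Sum>j\<le>m.
       card (connected_tuple_on S j) * card (monotone_tuple_on (A - S) (m - j)))"
  using bij_betw_same_card[OF bij_betw_split_component[OF assms(2)]] card_component_splittings[OF assms(1)]
  by simp

section \<open>Relabelling\<close>

lemma strict_mono_on_inv_into:
  fixes h :: "'a :: linorder \<Rightarrow> 'b :: linorder"
  assumes h: "strict_mono_on X h"
  shows "strict_mono_on (h ` X) (inv_into X h)"
proof (rule strict_mono_onI)
  fix a b assume "a \<in> h ` X" "b \<in> h ` X" "a < b"
  then obtain x y where xy: "x \<in> X" "y \<in> X" "a = h x" "b = h y" "h x < h y" by auto
  then have "x < y"
    using strict_mono_on_less[OF h] by blast
  then show "inv_into X h a < inv_into X h b"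
    using xy strict_mono_on_imp_inj_on[OF h] by simp
qed

lemma map_relabel_monotone_tuple_on:
  assumes h: "strict_mono_on X h" and ts: "ts \<in> monotone_tuple_on X m"
  shows "map (map_prod h h) ts \<in> monotone_tuple_on (h ` X) m"
proof -
  have st: "set ts \<subseteq> pairs_on X" and sorted: "sorted (map snd ts)" and len: "length ts = m"
    using ts unfolding monotone_tuple_on_def by auto
  have "set (map (map_prod h h) ts) \<subseteq> pairs_on (h ` X)"
  proof
    fix e assume "e \<in> set (map (map_prod h h) ts)"
    then obtain a b where ab: "(a, b) \<in> set ts" and e: "e = (h a, h b)" by auto
    then have "a \<in> X" "b \<in> X" "a < b"
      using st unfolding pairs_on_def by auto
    then show "e \<in> pairs_on (h ` X)"
      unfolding e pairs_on_def using strict_mono_onD[OF h] by auto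
  qed
  moreover have "snd ` set ts \<subseteq> X"
    using st unfolding pairs_on_def by auto
  then have "sorted (map h (map snd ts))"
    using sorted mono_on_subset[OF strict_mono_on_imp_mono_on[OF h]]
    by (intro sorted_map_mono) auto
  then have "sorted (map snd (map (map_prod h h) ts))"
    by (simp add: comp_def)
  ultimately show ?thesis
    using len unfolding monotone_tuple_on_def by simp
qed

lemma rtrancl_tuple_graph_map:
  assumes "(x, y) \<in> (tuple_graph ts)\<^sup>*"
  shows "(h x, h y) \<in> (tuple_graph (map (map_prod h h) ts))\<^sup>*"
  using assms
proof (induction rule: rtrancl_induct)
  case (step y z)
  have "(h y, h z) \<in> tuple_graph (map (map_prod h h) ts)"
    using step.hyps(2) unfolding tuple_graph_def by force
  then show ?case
    using step.IH by (rule rtrancl_into_rtrancl[rotated])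
qed simp

lemma map_relabel_connected_tuple_on:
  assumes h: "strict_mono_on X h" and ts: "ts \<in> connected_tuple_on X m"
  shows "map (map_prod h h) ts \<in> connected_tuple_on (h ` X) m"
proof -
  have "ts \<in> monotone_tuple_on X m" and conn: "\<forall>x\<in>X. \<forall>y\<in>X. (x, y) \<in> (tuple_graph ts)\<^sup>*"
    using ts unfolding connected_tuple_on_def by auto
  then show ?thesis
    using map_relabel_monotone_tuple_on[OF h] rtrancl_tuple_graph_map[of _ _ ts h]
    unfolding connected_tuple_on_def by auto
qed

text \<open>Monotone and connected tuples only depend on the order type of the underlying set.\<close>

lemma bij_betw_map_relabel:
  assumes h: "strict_mono_on X h"
    and relabel: "\<And>Y k ts. strict_mono_on Y k \<Longrightarrow> ts \<in> T Y \<Longrightarrow> map (map_prod k k) ts \<in> T (k ` Y)"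
    and pairs: "\<And>Y ts. ts \<in> T Y \<Longrightarrow> set ts \<subseteq> pairs_on Y"
  shows "bij_betw (map (map_prod h h)) (T X) (T (h ` X))"
proof -
  define g where "g = inv_into X h"
  have g: "strict_mono_on (h ` X) g"
    unfolding g_def by (rule strict_mono_on_inv_into[OF h])
  have inj: "inj_on h X"
    using h by (rule strict_mono_on_imp_inj_on)
  have gh: "g ` h ` X = X"
    unfolding g_def using inj by simp
  show ?thesis
  proof (rule bij_betw_byWitness[where f' = "map (map_prod g g)"])
    show "\<forall>ts\<in>T X. map (map_prod g g) (map (map_prod h h) ts) = ts"
    proof
      fix ts assume "ts \<in> T X"
      then have "map_prod g g (map_prod h h e) = e" if "e \<in> set ts" for e
        using that pairs inj unfolding pairs_on_def g_def by (cases e) fastforce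
      then show "map (map_prod g g) (map (map_prod h h) ts) = ts"
        by (simp add: map_idI)
    qed
    show "\<forall>ts\<in>T (h ` X). map (map_prod h h) (map (map_prod g g) ts) = ts"
    proof
      fix ts assume "ts \<in> T (h ` X)"
      then have "map_prod h h (map_prod g g e) = e" if "e \<in> set ts" for e
        using that pairs unfolding pairs_on_def g_def by (cases e) (fastforce simp: f_inv_into_f)
      then show "map (map_prod h h) (map (map_prod g g) ts) = ts"
        by (simp add: map_idI)
    qed
    show "map (map_prod h h) ` T X \<subseteq> T (h ` X)"
      using relabel[OF h] by blast
    show "map (map_prod g g) ` T (h ` X) \<subseteq> T X"
      using relabel[OF g] gh by auto
  qed
qed

lemma card_relabel_monotone_tuple_on:
  assumes "strict_mono_on X h"
  shows "card (monotone_tuple_on (h ` X) m) = card (monotone_tuple_on X m)"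
proof -
  have "bij_betw (map (map_prod h h)) (monotone_tuple_on X m) (monotone_tuple_on (h ` X) m)"
    by (rule bij_betw_map_relabel[OF assms map_relabel_monotone_tuple_on])
      (simp_all add: monotone_tuple_on_def)
  then show ?thesis by (rule bij_betw_same_card[symmetric])
qed

lemma card_relabel_connected_tuple_on:
  assumes "strict_mono_on X h"
  shows "card (connected_tuple_on (h ` X) m) = card (connected_tuple_on X m)"
proof -
  have "bij_betw (map (map_prod h h)) (connected_tuple_on X m) (connected_tuple_on (h ` X) m)"
    by (rule bij_betw_map_relabel[OF assms map_relabel_connected_tuple_on])
      (simp_all add: connected_tuple_on_def monotone_tuple_on_def)
  then show ?thesis by (rule bij_betw_same_card[symmetric])
qed

lemma card_tuple_on_standard:
  assumes "finite A"
  shows "card (monotone_tuple_on A m) = f_count (card A) m"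
    and "card (connected_tuple_on A m) = card (connected_tuple_on {1..card A} m)"
proof -
  obtain h where "bij_betw h {..<card A} A" and h: "strict_mono_on {..<card A} h"
    using ex_bij_betw_strict_mono_card[OF assms] .
  then have A: "A = h ` {..<card A}"
    by (simp add: bij_betw_def)
  have Suc: "strict_mono_on {..<card A} Suc" "{1..card A} = Suc ` {..<card A}"
    by (simp_all add: strict_mono_on_def image_Suc_lessThan)
  show "card (monotone_tuple_on A m) = f_count (card A) m"
    unfolding f_count_def monotone_tuple_eq_monotone_tuple_on
    by (subst A, subst Suc(2)) (simp only: card_relabel_monotone_tuple_on[OF h] card_relabel_monotone_tuple_on[OF Suc(1)])
  show "card (connected_tuple_on A m) = card (connected_tuple_on {1..card A} m)"
    by (subst A, subst Suc(2)) (simp only: card_relabel_connected_tuple_on[OF h] card_relabel_connected_tuple_on[OF Suc(1)])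
qed

section \<open>The exponential formula\<close>

lemma sum_subsets_containing:
  fixes g :: "nat \<Rightarrow> 'a :: comm_semiring_1"
  assumes A: "finite A" and t: "t \<in> A"
  shows "(\<Sum>S | S \<subseteq> A \<and> t \<in> S. g (card S)) =
    (\<Sum>k=1..card A. of_nat (card A - 1 choose (k - 1)) * g k)"
proof -
  define B where "B = A - {t}"
  have B: "finite B" "card A = Suc (card B)"
    unfolding B_def using A by (simp_all add: card_Suc_Diff1[OF A t])
  have "bij_betw (insert t) (Pow B) {S. S \<subseteq> A \<and> t \<in> S}"
    by (rule bij_betw_byWitness[where f' = "\<lambda>S. S - {t}"]) (use t in \<open>auto simp: B_def\<close>)
  then have "(\<Sum>S | S \<subseteq> A \<and> t \<in> S. g (card S)) = (\<Sum>S\<in>Pow B. g (card (insert t S)))"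
    by (rule sum.reindex_bij_betw[symmetric])
  also have "\<dots> = (\<Sum>S\<in>Pow B. g (Suc (card S)))"
  proof (rule sum.cong[OF refl])
    fix S assume "S \<in> Pow B"
    then have "finite S" "t \<notin> S"
      using finite_subset[OF _ B(1)] unfolding B_def by auto
    then show "g (card (insert t S)) = g (Suc (card S))" by simp
  qed
  also have "\<dots> = (\<Sum>i\<le>card B. \<Sum>S | S \<subseteq> B \<and> card S = i. g (Suc i))"
    by (subst sum.group[symmetric, where g = card and T = "{..card B}"])
      (use B(1) card_mono in \<open>auto intro!: sum.cong\<close>)
  also have "\<dots> = (\<Sum>i\<le>card B. of_nat (card B choose i) * g (Suc i))"
    using n_subsets[OF B(1)] by simp
  also have "\<dots> = (\<Sum>k=1..card A. of_nat (card A - 1 choose (k - 1)) * g k)"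
    unfolding B(2) by (rule sum.reindex_bij_witness[where i = "\<lambda>k. k - 1" and j = Suc]) auto
  finally show ?thesis .
qed

text \<open>Recursion obtained by splitting off the connected component of the point n + 1.\<close>

lemma f_count_Suc:
  "f_count (Suc n) m = (\<Sum>k=1..Suc n. (n choose (k - 1)) *
     (\<Sum>j\<le>m. card (connected_tuple_on {1..k} j) * f_count (Suc n - k) (m - j)))"
proof -
  let ?A = "{1..Suc n}"
  let ?G = "\<lambda>k. \<Sum>j\<le>m. card (connected_tuple_on {1..k} j) * f_count (Suc n - k) (m - j)"
  have "f_count (Suc n) m = card (monotone_tuple_on ?A m)"
    unfolding f_count_def monotone_tuple_eq_monotone_tuple_on ..
  also have "\<dots> = (\<Sum>S | S \<subseteq> ?A \<and> Suc n \<in> S. \<Sum>j\<le>m.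
      card (connected_tuple_on S j) * card (monotone_tuple_on (?A - S) (m - j)))"
    by (rule card_monotone_tuple_on_split) auto
  also have "\<dots> = (\<Sum>S | S \<subseteq> ?A \<and> Suc n \<in> S. ?G (card S))"
  proof (rule sum.cong[OF refl])
    fix S assume "S \<in> {S. S \<subseteq> ?A \<and> Suc n \<in> S}"
    then have S: "finite S" "finite (?A - S)" "card (?A - S) = Suc n - card S"
      using finite_subset[of S ?A] by (simp_all add: card_Diff_subset)
    show "(\<Sum>j\<le>m. card (connected_tuple_on S j) * card (monotone_tuple_on (?A - S) (m - j))) = ?G (card S)"
      using card_tuple_on_standard[OF S(1)] card_tuple_on_standard(1)[OF S(2)] S(3) by simp
  qed
  also have "\<dots> = (\<Sum>k=1..Suc n. (n choose (k - 1)) * ?G k)"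
    using sum_subsets_containing[of ?A "Suc n" ?G] by simp
  finally show ?thesis .
qed

lemma egf_coeff_of_recursion:
  fixes f c :: "nat \<Rightarrow> nat \<Rightarrow> nat"
  assumes rec: "f (Suc n) m = (\<Sum>k=1..Suc n. (n choose (k - 1)) * (\<Sum>j\<le>m. c k j * f (Suc n - k) (m - j)))"
  shows "(of_nat (f (Suc n) m) / fact n :: 'a :: field_char_0) =
    (\<Sum>i=0..n. \<Sum>j=0..m. of_nat (f i j) / fact i * (of_nat (c (Suc (n - i)) (m - j)) / fact (n - i)))"
proof -
  have "(of_nat (f (Suc n) m) :: 'a) =
      (\<Sum>i=0..n. of_nat (n choose (n - i)) * (\<Sum>j\<le>m. of_nat (c (Suc (n - i)) j) * of_nat (f i (m - j))))"
    unfolding rec of_nat_sum of_nat_mult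
    by (rule sum.reindex_bij_witness[where i = "\<lambda>i. Suc (n - i)" and j = "\<lambda>k. Suc n - k"]) auto
  also have "\<dots> = (\<Sum>i=0..n. fact n / (fact i * fact (n - i)) *
      (\<Sum>j=0..m. of_nat (f i j) * of_nat (c (Suc (n - i)) (m - j))))"
  proof (rule sum.cong[OF refl])
    fix i assume i: "i \<in> {0..n}"
    have "(\<Sum>j\<le>m. of_nat (c (Suc (n - i)) j) * of_nat (f i (m - j)) :: 'a) =
        (\<Sum>j=0..m. of_nat (f i j) * of_nat (c (Suc (n - i)) (m - j)))"
      by (subst sum.atLeastAtMost_rev) (simp add: atLeast0AtMost mult.commute)
    moreover have "(of_nat (n choose (n - i)) :: 'a) = fact n / (fact i * fact (n - i))"
      using i binomial_fact[of "n - i" n] by (simp add: mult.commute)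
    ultimately show "of_nat (n choose (n - i)) * (\<Sum>j\<le>m. of_nat (c (Suc (n - i)) j) * of_nat (f i (m - j))) =
        fact n / (fact i * fact (n - i)) * (\<Sum>j=0..m. of_nat (f i j) * of_nat (c (Suc (n - i)) (m - j)) :: 'a)"
      by simp
  qed
  finally show ?thesis
    by (simp add: sum_divide_distrib sum_distrib_left field_simps)
qed

lemma of_nat_Suc_mult_div_fact_Suc:
  "(of_nat (Suc n) :: 'a :: field_char_0) * (x / fact (Suc n)) = x / fact n"
proof -
  have "(of_nat (Suc n) :: 'a) \<noteq> 0"
    by (rule of_nat_neq_0)
  then show ?thesis
    by (simp add: field_simps del: of_nat_Suc)
qed

lemma fps_deriv_nth_nth:
  fixes F :: "'a :: comm_ring_1 fps fps"
  shows "fps_deriv F $ n $ m = of_nat (Suc n) * F $ Suc n $ m"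
  by (simp flip: fps_of_nat)

definition monotone_egf :: "rat fps fps" where
  "monotone_egf = Abs_fps (\<lambda>d. Abs_fps (\<lambda>m. of_nat (f_count d m) / fact d))"

lemma fps_deriv_monotone_egf: "fps_deriv monotone_egf = monotone_egf * fps_deriv log_wave"
proof (intro fps_ext)
  fix n m
  let ?c = "\<lambda>k j. card (connected_tuple_on {1..k} j)"
  have "fps_deriv monotone_egf $ n $ m = of_nat (f_count (Suc n) m) / fact n"
    unfolding fps_deriv_nth_nth monotone_egf_def by (simp add: of_nat_Suc_mult_div_fact_Suc del: of_nat_Suc)
  also have "\<dots> = (\<Sum>i=0..n. \<Sum>j=0..m. of_nat (f_count i j) / fact i * (of_nat (?c (Suc (n - i)) (m - j)) / fact (n - i)))"
    by (rule egf_coeff_of_recursion[OF f_count_Suc])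
  also have "\<dots> = (monotone_egf * fps_deriv log_wave) $ n $ m"
  proof -
    have deriv: "fps_deriv log_wave $ k $ j = of_nat (?c (Suc k) j) / fact k" for k j
      unfolding fps_deriv_nth_nth log_wave_nth by (simp add: of_nat_Suc_mult_div_fact_Suc del: of_nat_Suc)
    show ?thesis
      unfolding fps_mult_nth fps_sum_nth deriv by (simp add: monotone_egf_def)
  qed
  finally show "fps_deriv monotone_egf $ n $ m = (monotone_egf * fps_deriv log_wave) $ n $ m" .
qed

lemma fps_deriv_exp_series: "fps_deriv exp_series = exp_series"
proof (intro fps_ext)
  fix n m
  show "fps_deriv exp_series $ n $ m = exp_series $ n $ m"
    unfolding fps_deriv_nth_nth exp_series_def using of_nat_Suc_mult_div_fact_Suc[of n 1]
    by (simp del: of_nat_Suc)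
qed

lemma fps_deriv_wave_function: "fps_deriv wave_function = wave_function * fps_deriv log_wave"
proof -
  have "log_wave $ 0 = 0"
    by (intro fps_ext) (simp add: log_wave_nth)
  from fps_compose_deriv[OF this, of exp_series] show ?thesis
    unfolding wave_function_def fps_deriv_exp_series .
qed

lemma fps_deriv_eq_mult_unique:
  fixes X Y D :: "'a :: {idom, semiring_char_0} fps"
  assumes "X $ 0 = Y $ 0" "fps_deriv X = X * D" "fps_deriv Y = Y * D"
  shows "X = Y"
proof (intro fps_ext)
  fix n
  have "\<forall>k\<le>n. X $ k = Y $ k"
  proof (induction n)
    case (Suc n)
    have "(X * D) $ n = (Y * D) $ n"
      unfolding fps_mult_nth using Suc.IH by (intro sum.cong) auto
    then have "of_nat (Suc n) * X $ Suc n = of_nat (Suc n) * Y $ Suc n"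
      using fps_deriv_nth[of X n] fps_deriv_nth[of Y n] assms(2,3) by simp
    then have "X $ Suc n = Y $ Suc n"
      by (simp del: of_nat_Suc)
    with Suc.IH show ?case
      by (auto simp: le_Suc_eq)
  qed (use assms(1) in simp)
  then show "X $ n = Y $ n" by simp
qed

lemma f_count_0: "f_count 0 m = (if m = 0 then 1 else 0)"
proof -
  have "transp_pairs 0 = {}"
    unfolding transp_pairs_def by auto
  then have "monotone_tuple 0 m = (if m = 0 then {[]} else {})"
    unfolding monotone_tuple_def by auto
  then show ?thesis
    unfolding f_count_def by simp
qed

theorem proposition5p1:
  shows "wave_function = Abs_fps (\<lambda>d. if d = 0 then 1
           else Abs_fps (\<lambda>m. of_nat (f_count d m) / fact d))"
proof -
  have "Abs_fps (\<lambda>d. if d = 0 then 1 else Abs_fps (\<lambda>m. of_nat (f_count d m) / fact d)) = monotone_egf"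
    unfolding monotone_egf_def by (intro fps_ext) (auto simp: f_count_0)
  moreover have "wave_function = monotone_egf"
  proof (rule fps_deriv_eq_mult_unique[OF _ fps_deriv_wave_function fps_deriv_monotone_egf])
    show "wave_function $ 0 = monotone_egf $ 0"
      unfolding wave_function_def exp_series_def monotone_egf_def by (intro fps_ext) (simp add: f_count_0)
  qed
  ultimately show ?thesis by simp
qed

end
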